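(* Let $\gamma=\exp(V_\gamma+Z_\gamma)\in H_n$ with $Z_\gamma$ in the center of $\mathfrak h_n$ and $V_\gamma$ orthogonal to the center, and let $\sigma$ be a $\gamma$-periodic magnetic geodesic with $\sigma(0)=e$. If $V_\gamma\neq0$, then $\sigma$ is a one-parameter subgroup which is not central (i.e. $\sigma(t)\notin Z(H_n)$ for some $t$).
   Context: Let $\mathfrak h_n$ be the real Lie algebra with basis $X_1,\dots,X_n,Y_1,\dots,Y_n,Z$ whose only nonzero brackets among basis vectors are $[X_i,Y_i]=Z$, and $H_n$ the simply connected Lie group with Lie algebra $\mathfrak h_n$; $\exp(U)\exp(W)=\exp(U+W+\tfrac12[U,W])$. Fix $A_i>0$; $g$ is the left-invariant metric with orthonormal basis $\{X_i/\sqrt{A_i},Y_i/\sqrt{A_i},Z\}$; the center is $\mathrm{span}\{Z\}$. With $\{\alpha_i,\beta_i,\zeta\}$ the dual basis and $B\in\mathbb R$, $\Omega=d(B\zeta)$; magnetic geodesics solve $\nabla_{\sigma'}\sigma'=F\sigma'$, $g(Fu,v)=\Omega(u,v)$. The magnetic geodesics with $\sigma(0)=e$ are exactly $\sigma(t)=\exp(\sum x_iX_i+\sum y_iY_i+zZ)$ with, for parameters $(u_i,v_i,z_0)$: if $z_0\ne0$, $x_i=\frac{u_i}{z_0}\sin(\frac{z_0t}{A_i})-\frac{v_i}{z_0}(1-\cos(\frac{z_0t}{A_i}))$, $y_i=\frac{u_i}{z_0}(1-\cos(\frac{z_0t}{A_i}))+\frac{v_i}{z_0}\sin(\frac{z_0t}{A_i})$,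 $z=(z_0+B+\sum\frac{u_i^2+v_i^2}{2A_iz_0})t-\sum\frac{u_i^2+v_i^2}{2z_0^2}\sin(\frac{z_0t}{A_i})$; if $z_0=0$, $x_i=u_it/A_i$, $y_i=v_it/A_i$, $z=Bt$. Such $\sigma$ is a one-parameter subgroup iff $z_0=0$ or all $u_i=v_i=0$. For $\gamma\neq e$, $\sigma$ is $\gamma$-periodic with period $\omega\ne0$ if $\gamma\sigma(t)=\sigma(t+\omega)$ for all $t$. *)

theory Defs
  imports "HOL-Analysis.Analysis"
begin

text \<open>The Heisenberg group H_n is identified with its Lie algebra h_n via exp
(a global diffeomorphism).  An element exp(sum x_i X_i + sum y_i Y_i + z Z) is
represented by the triple (x, y, z), with x, y indexed by a finite type 'n
(so n = CARD('n)).\<close>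

type_synonym 'n heis = "(real^'n) \<times> (real^'n) \<times> real"

definition heis_e :: "'n::finite heis" where
  "heis_e = (0, 0, 0)"

text \<open>Group law: exp(U)exp(W) = exp(U + W + 1/2 [U,W]),
with [U,W] = (sum_i (u_i w'_i - u'_i w_i)) Z.\<close>
definition heis_mult :: "'n::finite heis \<Rightarrow> 'n heis \<Rightarrow> 'n heis" where
  "heis_mult g h = (case g of (x, y, z) \<Rightarrow> case h of (x', y', z') \<Rightarrow>
     (x + x', y + y', z + z' + (1/2) * (\<Sum>i\<in>UNIV. x $ i * y' $ i - y $ i * x' $ i)))"

definition heis_center :: "'n::finite heis set" where
  "heis_center = {g. \<forall>h. heis_mult g h = heis_mult h g}"

definition one_param_subgroup :: "(real \<Rightarrow> 'n::finite heis) \<Rightarrow> bool" where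
  "one_param_subgroup \<sigma> \<longleftrightarrow> continuous_on UNIV \<sigma> \<and>
     (\<forall>s t. \<sigma> (s + t) = heis_mult (\<sigma> s) (\<sigma> t))"

text \<open>The explicit magnetic geodesic with parameters (u, v, z0), for metric
constants A and magnetic strength B.\<close>
definition mag_curve :: "real^'n \<Rightarrow> real \<Rightarrow> real^'n::finite \<Rightarrow> real^'n \<Rightarrow> real \<Rightarrow> real \<Rightarrow> 'n heis" where
  "mag_curve A B u v z0 t =
    (if z0 \<noteq> 0 then
      ((\<chi> i. u $ i / z0 * sin (z0 * t / A $ i) - v $ i / z0 * (1 - cos (z0 * t / A $ i))),
       (\<chi> i. u $ i / z0 * (1 - cos (z0 * t / A $ i)) + v $ i / z0 * sin (z0 * t / A $ i)),
       (z0 + B + (\<Sum>i\<in>UNIV. (u $ i ^ 2 + v $ i ^ 2) / (2 * A $ i * z0))) * t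
         - (\<Sum>i\<in>UNIV. (u $ i ^ 2 + v $ i ^ 2) / (2 * z0 ^ 2) * sin (z0 * t / A $ i)))
     else
      ((\<chi> i. u $ i * t / A $ i), (\<chi> i. v $ i * t / A $ i), B * t))"

text \<open>Magnetic geodesics through the identity e (the context states that these are
exactly the curves above).\<close>
definition mag_geodesic_at_e :: "real^'n::finite \<Rightarrow> real \<Rightarrow> (real \<Rightarrow> 'n heis) \<Rightarrow> bool" where
  "mag_geodesic_at_e A B \<sigma> \<longleftrightarrow> (\<exists>u v z0. \<sigma> = mag_curve A B u v z0)"

definition gamma_periodic :: "'n::finite heis \<Rightarrow> (real \<Rightarrow> 'n heis) \<Rightarrow> bool" where
  "gamma_periodic \<gamma> \<sigma> \<longleftrightarrow> \<gamma> \<noteq> heis_e \<and>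
     (\<exists>\<omega>. \<omega> \<noteq> 0 \<and> (\<forall>t. heis_mult \<gamma> (\<sigma> t) = \<sigma> (t + \<omega>)))"

end

theory Submission
  imports Defs
begin

(* The horizontal projection pi(x, y, z) = (x, y) is a homomorphism onto the abelian
   group R^n x R^n, so gamma-periodicity gives pi(sigma(t + omega)) = pi(gamma) + pi(sigma(t)).
   For z0 <> 0 the horizontal part of sigma is bounded (it is built from sines and cosines),
   which forces pi(gamma) = 0, contrary to V_gamma <> 0.  Hence z0 = 0 and sigma(t) = exp(tW)
   is a one-parameter subgroup; since gamma = sigma(omega) = exp(omega W), pi(W) <> 0, and the
   center consists exactly of the elements with zero horizontal part. *)

lemma bounded_range_increment_eq_0:
  fixes f :: "real \<Rightarrow> 'a::real_normed_vector"
  assumes incr: "\<And>t. f (t + w) = c + f t" and bd: "bounded (range f)"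
  shows "c = 0"
proof -
  obtain M where M: "\<And>t. norm (f t) \<le> M"
    using bd by (auto simp: bounded_iff)
  have iter: "f (real n * w) = real n *\<^sub>R c + f 0" for n :: nat
  proof (induction n)
    case (Suc n)
    have "f (real (Suc n) * w) = c + f (real n * w)"
      using incr[of "real n * w"] by (simp add: algebra_simps)
    with Suc show ?case by (simp add: algebra_simps)
  qed simp
  have bound: "real n * norm c \<le> 2 * M" for n :: nat
  proof -
    have "real n * norm c = norm (f (real n * w) - f 0)" by (simp add: iter)
    also have "\<dots> \<le> 2 * M"
      using norm_triangle_ineq4 [of "f (real n * w)" "f 0"] M [of "real n * w"] M [of 0]
      by linarith
    finally show ?thesis .
  qed
  show "c = 0"
  proof (rule ccontr)
    assume "c \<noteq> 0"
    obtain n :: nat where "2 * M / norm c < real n"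
      using reals_Archimedean2 by blast
    with \<open>c \<noteq> 0\<close> have "2 * M < real n * norm c"
      by (simp add: field_simps)
    with bound show False
      by (simp add: not_le [symmetric])
  qed
qed

lemma abs_sin_plus_one_minus_cos_le:
  fixes a b s c :: real
  shows "\<bar>a * sin s + b * (1 - cos c)\<bar> \<le> \<bar>a\<bar> + 2 * \<bar>b\<bar>"
proof -
  have "\<bar>a * sin s\<bar> \<le> \<bar>a\<bar>"
    by (simp add: abs_mult mult_left_le)
  moreover have "\<bar>b * (1 - cos c)\<bar> \<le> \<bar>b\<bar> * 2"
    unfolding abs_mult by (intro mult_left_mono) (use abs_cos_le_one [of c] in auto)
  ultimately show ?thesis by linarith
qed

lemma bounded_range_vec:
  fixes f :: "'a \<Rightarrow> real^'n::finite"
  assumes "\<And>t i. \<bar>f t $ i\<bar> \<le> M i"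
  shows "bounded (range f)"
proof (rule boundedI)
  fix y assume "y \<in> range f"
  then obtain t where "y = f t" by blast
  have "norm (f t) \<le> (\<Sum>i\<in>UNIV. \<bar>f t $ i\<bar>)" by (rule norm_le_l1_cart)
  also have "\<dots> \<le> sum M UNIV" by (intro sum_mono assms)
  finally show "norm y \<le> sum M UNIV" using \<open>y = f t\<close> by simp
qed

definition heis_horiz :: "'n::finite heis \<Rightarrow> (real^'n) \<times> (real^'n)" where
  "heis_horiz g = (fst g, fst (snd g))"

lemma heis_horiz_mult [simp]: "heis_horiz (heis_mult g h) = heis_horiz g + heis_horiz h"
  by (cases g; cases h) (simp add: heis_horiz_def heis_mult_def)

lemma heis_horiz_scaleR [simp]: "heis_horiz (t *\<^sub>R g) = t *\<^sub>R heis_horiz g"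
  by (simp add: heis_horiz_def)

lemma heis_mult_0_right [simp]: "heis_mult g 0 = g"
  by (cases g) (simp add: heis_mult_def zero_prod_def)

lemma heis_mult_commute_iff:
  "heis_mult g h = heis_mult h g \<longleftrightarrow>
     (\<Sum>i\<in>UNIV. fst g $ i * fst (snd h) $ i - fst (snd g) $ i * fst h $ i) = 0"
proof -
  obtain x y z x' y' z' where g: "g = (x, y, z)" and h: "h = (x', y', z')"
    by (metis prod.collapse)
  have "(\<Sum>i\<in>UNIV. x' $ i * y $ i - y' $ i * x $ i) = - (\<Sum>i\<in>UNIV. x $ i * y' $ i - y $ i * x' $ i)"
    by (simp add: sum_negf[symmetric] algebra_simps)
  then show ?thesis
    by (simp add: g h heis_mult_def)
qed

lemma heis_center_eq: "heis_center = {g. heis_horiz g = 0}"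
proof (intro set_eqI iffI)
  fix g
  assume "g \<in> heis_center"
  obtain x y z where g: "g = (x, y, z)" by (metis prod.collapse)
  \<comment> \<open>(-y, x) is the symplectic dual of (x, y)\<close>
  have "heis_mult g (- y, x, 0) = heis_mult (- y, x, 0) g"
    using \<open>g \<in> heis_center\<close> by (simp add: heis_center_def)
  then have "x \<bullet> x + y \<bullet> y = 0"
    by (simp add: heis_mult_commute_iff g inner_vec_def sum.distrib)
  then show "g \<in> {g. heis_horiz g = 0}"
    by (simp add: g heis_horiz_def add_nonneg_eq_0_iff zero_prod_def)
next
  fix g
  assume "g \<in> {g. heis_horiz g = 0}"
  then have "fst g = 0" "fst (snd g) = 0"
    by (simp_all add: heis_horiz_def zero_prod_def)
  then show "g \<in> heis_center"
    by (simp add: heis_center_def heis_mult_commute_iff)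
qed

lemma heis_mult_scaleR_scaleR: "heis_mult (s *\<^sub>R W) (t *\<^sub>R W) = (s + t) *\<^sub>R W"
  by (cases W) (simp add: heis_mult_def algebra_simps sum.neutral)

lemma one_param_subgroup_scaleR: "one_param_subgroup (\<lambda>t. t *\<^sub>R W)"
  unfolding one_param_subgroup_def heis_mult_scaleR_scaleR
  by (auto intro: continuous_intros)

lemma bounded_range_heis_horiz_mag_curve:
  assumes "z0 \<noteq> 0"
  shows "bounded (range (\<lambda>t. heis_horiz (mag_curve A B u v z0 t)))"
proof -
  have "\<bar>fst (mag_curve A B u v z0 t) $ i\<bar> \<le> \<bar>u $ i / z0\<bar> + 2 * \<bar>v $ i / z0\<bar>"
    for t i
    using abs_sin_plus_one_minus_cos_le
      [of "u $ i / z0" "z0 * t / A $ i" "- v $ i / z0" "z0 * t / A $ i"]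
    by (simp add: mag_curve_def assms algebra_simps)
  moreover have
    "\<bar>fst (snd (mag_curve A B u v z0 t)) $ i\<bar> \<le> \<bar>v $ i / z0\<bar> + 2 * \<bar>u $ i / z0\<bar>"
    for t i
    using abs_sin_plus_one_minus_cos_le
      [of "v $ i / z0" "z0 * t / A $ i" "u $ i / z0" "z0 * t / A $ i"]
    by (simp add: mag_curve_def assms algebra_simps)
  ultimately have "bounded (range (\<lambda>t. fst (mag_curve A B u v z0 t)) \<times>
                           range (\<lambda>t. fst (snd (mag_curve A B u v z0 t))))"
    by (intro bounded_Times bounded_range_vec)
  then show ?thesis
    by (rule bounded_subset) (auto simp: heis_horiz_def)
qed

lemma mag_curve_0:
  "mag_curve A B u v 0 = (\<lambda>t. t *\<^sub>R ((\<chi> i. u $ i / A $ i), (\<chi> i. v $ i / A $ i), B))"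
  by (simp add: fun_eq_iff mag_curve_def vec_eq_iff)

theorem lemma4p2:
  fixes A :: "real^'n::finite" and B :: real
    and \<gamma> :: "'n heis" and \<sigma> :: "real \<Rightarrow> 'n heis"
  assumes "\<forall>i. A $ i > 0"
    and "mag_geodesic_at_e A B \<sigma>"
    and "gamma_periodic \<gamma> \<sigma>"
    and "(fst \<gamma>, fst (snd \<gamma>)) \<noteq> (0, 0)"
  shows "one_param_subgroup \<sigma> \<and> (\<exists>t. \<sigma> t \<notin> heis_center)"
proof -
  obtain u v z0 where \<sigma>: "\<sigma> = mag_curve A B u v z0"
    using assms(2) unfolding mag_geodesic_at_e_def by blast
  obtain \<omega> where periodic: "\<And>t. heis_mult \<gamma> (\<sigma> t) = \<sigma> (t + \<omega>)"
    using assms(3) unfolding gamma_periodic_def by blast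
  have \<gamma>_horiz: "heis_horiz \<gamma> \<noteq> 0"
    using assms(4) by (simp add: heis_horiz_def zero_prod_def)
  have "z0 = 0"
  proof (rule ccontr)
    assume "z0 \<noteq> 0"
    have "heis_horiz \<gamma> = 0"
    proof (rule bounded_range_increment_eq_0)
      show "heis_horiz (\<sigma> (t + \<omega>)) = heis_horiz \<gamma> + heis_horiz (\<sigma> t)" for t
        by (simp flip: periodic)
      show "bounded (range (\<lambda>t. heis_horiz (\<sigma> t)))"
        using \<open>z0 \<noteq> 0\<close> by (simp add: \<sigma> bounded_range_heis_horiz_mag_curve)
    qed
    with \<gamma>_horiz show False ..
  qed
  then obtain W where \<sigma>_W: "\<sigma> = (\<lambda>t. t *\<^sub>R W)"
    using \<sigma> mag_curve_0 by blast
  have "\<gamma> = \<omega> *\<^sub>R W"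
    using periodic [of 0] by (simp add: \<sigma>_W)
  with \<gamma>_horiz have "\<sigma> 1 \<notin> heis_center"
    by (auto simp: \<sigma>_W heis_center_eq)
  with \<sigma>_W one_param_subgroup_scaleR show ?thesis
    by blast
qed

end
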